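(* Let $\mathcal{L}$ and $\mathcal{L}'$ be lattices and let $l,l':\mathbb{N}\to\mathbb{N}$ be strictly positive functions. If $\mathcal{L}$ is $\Omega(l(n))$ and $\mathcal{L}'$ is $\Omega(l'(n))$, then the product lattice $\mathcal{L}\times\mathcal{L}'$ is $\Omega\big(l(\lfloor n/2\rfloor)\,l'(\lfloor n/2\rfloor)\big)$.
   Context: A lattice means a partially ordered set $(\mathcal{L},\sqsubseteq)$ with least element $\bot$ in which any two elements have a least upper bound $\sqcup$; $\bigsqcup S$ denotes the least upper bound of a finite set ($\bigsqcup\emptyset=\bot$). The product lattice $\mathcal{L}\times\mathcal{L}'$ has pairs ordered componentwise. The closure set of a finite $S$ is $C(S)=\{\bigsqcup S' : S'\subseteq S\}$ and $CS_{\mathcal{L}}(n)=\max\{|C(S)| : S\subseteq\mathcal{L}\text{ finite}, |S|\le n\}$. For $f,g:\mathbb{N}\to\mathbb{N}$, $f$ is $\Omega(g)$ iff there exist $N_0\in\mathbb{N}$ and rational $C>0$ with $f(n)\ge Cg(n)$ for all $n\ge N_0$. A lattice $\mathcal{L}$ is $\Omega(f(n))$ iff $CS_{\mathcal{L}}(n)$ is $\Omega(f(n))$. *)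

theory Defs
  imports Complex_Main "HOL-Library.Product_Order"
begin

text \<open>A lattice in the sense of the paper: a partial order with least element in
which any two elements have a least upper bound, i.e. a join-semilattice with bottom,
rendered by the type class combination {semilattice_sup, order_bot}.
The product lattice is the product type with the componentwise order (Product_Order).\<close>

definition lub_set :: "'a::{semilattice_sup,order_bot} set \<Rightarrow> 'a" where
  "lub_set S = Finite_Set.fold sup bot S"

definition closure_set :: "'a::{semilattice_sup,order_bot} set \<Rightarrow> 'a set" where
  "closure_set S = {lub_set S' | S'. S' \<subseteq> S}"

definition CS :: "'a::{semilattice_sup,order_bot} itself \<Rightarrow> nat \<Rightarrow> nat" where
  "CS _ n = Max {card (closure_set (S::'a set)) | S. finite S \<and> card S \<le> n}"

definition bigOmega :: "(nat \<Rightarrow> nat) \<Rightarrow> (nat \<Rightarrow> nat) \<Rightarrow> bool" where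
  "bigOmega f g \<longleftrightarrow> (\<exists>N0::nat. \<exists>C::rat. C > 0 \<and>
      (\<forall>n\<ge>N0. of_nat (f n) \<ge> C * of_nat (g n)))"

definition lattice_Omega :: "'a::{semilattice_sup,order_bot} itself \<Rightarrow> (nat \<Rightarrow> nat) \<Rightarrow> bool" where
  "lattice_Omega T f \<longleftrightarrow> bigOmega (CS T) f"

end

theory Submission
  imports Defs
begin

text \<open>If \<open>S\<close> and \<open>T\<close> realise \<open>CS\<close> in the two factors, the set
  \<open>S \<times> {\<bottom>} \<union> {\<bottom>} \<times> T\<close> has at most \<open>|S| + |T|\<close> elements, and joining a subset
  of \<open>S \<times> {\<bottom>}\<close> with a subset of \<open>{\<bottom>} \<times> T\<close> yields every pair of joins, so its
  closure set contains \<open>C(S) \<times> C(T)\<close>. Hence the product of the two maxima at sizes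
  \<open>m\<close> and \<open>k\<close> is at most the maximum for the product lattice at size \<open>m + k\<close>, and
  lower bounds of the form \<open>\<Omega>\<close> multiply.\<close>

lemma lub_set_empty [simp]: "lub_set {} = bot"
  by (simp add: lub_set_def)

lemma lub_set_insert [simp]:
  assumes "finite S"
  shows "lub_set (insert x S) = sup x (lub_set S)"
proof -
  interpret comp_fun_idem "sup :: 'a \<Rightarrow> 'a \<Rightarrow> 'a" by (fact comp_fun_idem_sup)
  show ?thesis unfolding lub_set_def using assms by simp
qed

lemma lub_set_le_iff:
  assumes "finite S"
  shows "lub_set S \<le> u \<longleftrightarrow> (\<forall>x\<in>S. x \<le> u)"
  using assms by (induction S rule: finite_induct) auto

lemma lub_set_upper:
  assumes "finite S" "x \<in> S"
  shows "x \<le> lub_set S"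
  using lub_set_le_iff[OF assms(1), of "lub_set S"] assms(2) by blast

lemma lub_set_axes:
  fixes A :: "'a::{semilattice_sup,order_bot} set" and B :: "'b::{semilattice_sup,order_bot} set"
  assumes "finite A" "finite B"
  shows "lub_set (A \<times> {bot} \<union> {bot} \<times> B) = (lub_set A, lub_set B)"
proof (rule order.antisym)
  have "finite (A \<times> {bot} \<union> {bot} \<times> B)" using assms by simp
  then show "lub_set (A \<times> {bot} \<union> {bot} \<times> B) \<le> (lub_set A, lub_set B)"
    using assms by (simp only: lub_set_le_iff) (auto simp: less_eq_prod_def intro: lub_set_upper)
  have "(a, bot) \<le> lub_set (A \<times> {bot} \<union> {bot} \<times> B)" if "a \<in> A" for a
    using assms that by (auto intro: lub_set_upper)
  moreover have "(bot, b) \<le> lub_set (A \<times> {bot} \<union> {bot} \<times> B)" if "b \<in> B" for b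
    using assms that by (auto intro: lub_set_upper)
  ultimately show "(lub_set A, lub_set B) \<le> lub_set (A \<times> {bot} \<union> {bot} \<times> B)"
    using assms by (auto simp: lub_set_le_iff less_eq_prod_def)
qed

lemma closure_set_eq_image_Pow: "closure_set S = lub_set ` Pow S"
  unfolding closure_set_def by auto

lemma card_closure_set_le:
  assumes "finite S"
  shows "card (closure_set S) \<le> 2 ^ card S"
proof -
  have "card (closure_set S) \<le> card (Pow S)"
    unfolding closure_set_eq_image_Pow by (rule card_image_le) (simp add: assms)
  then show ?thesis using assms by (simp add: card_Pow)
qed

lemma closure_set_axes:
  assumes "finite A" "finite B"
  shows "closure_set A \<times> closure_set B \<subseteq> closure_set (A \<times> {bot} \<union> {bot} \<times> B)"
proof
  fix p assume "p \<in> closure_set A \<times> closure_set B"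
  then obtain A' B' where sub: "A' \<subseteq> A" "B' \<subseteq> B" and p: "p = (lub_set A', lub_set B')"
    unfolding closure_set_def by auto
  have "p = lub_set (A' \<times> {bot} \<union> {bot} \<times> B')"
    using p sub assms by (simp add: lub_set_axes finite_subset)
  moreover have "A' \<times> {bot} \<union> {bot} \<times> B' \<subseteq> A \<times> {bot} \<union> {bot} \<times> B"
    using sub by auto
  ultimately show "p \<in> closure_set (A \<times> {bot} \<union> {bot} \<times> B)"
    unfolding closure_set_def by blast
qed

lemma finite_CS_candidates:
  "finite {card (closure_set (S::'a::{semilattice_sup,order_bot} set)) | S. finite S \<and> card S \<le> n}"
proof (rule finite_subset)
  show "{card (closure_set (S::'a set)) | S. finite S \<and> card S \<le> n} \<subseteq> {..2 ^ n}"
    using card_closure_set_le order_trans power_increasing[of _ n "2::nat"] by fastforce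
qed simp

lemma card_closure_set_le_CS:
  fixes S :: "'a::{semilattice_sup,order_bot} set"
  assumes "finite S" "card S \<le> n"
  shows "card (closure_set S) \<le> CS TYPE('a) n"
  unfolding CS_def using assms by (intro Max_ge[OF finite_CS_candidates]) auto

lemma CS_attained:
  obtains S :: "'a::{semilattice_sup,order_bot} set"
  where "finite S" "card S \<le> n" "card (closure_set S) = CS TYPE('a) n"
proof -
  have "{card (closure_set (S::'a set)) | S. finite S \<and> card S \<le> n} \<noteq> {}"
    using finite.emptyI by fastforce
  then have "CS TYPE('a) n \<in> {card (closure_set (S::'a set)) | S. finite S \<and> card S \<le> n}"
    unfolding CS_def by (rule Max_in[OF finite_CS_candidates])
  then show ?thesis using that by auto
qed

lemma CS_mono:
  assumes "m \<le> n"
  shows "CS TYPE('a::{semilattice_sup,order_bot}) m \<le> CS TYPE('a) n"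
proof -
  obtain S :: "'a set" where "finite S" "card S \<le> m" "card (closure_set S) = CS TYPE('a) m"
    by (rule CS_attained)
  then show ?thesis using assms card_closure_set_le_CS[of S n] by simp
qed

lemma CS_mult_le_CS_prod:
  "CS TYPE('a::{semilattice_sup,order_bot}) m * CS TYPE('b::{semilattice_sup,order_bot}) k
     \<le> CS TYPE('a \<times> 'b) (m + k)"
proof -
  obtain A :: "'a set" where A: "finite A" "card A \<le> m" "card (closure_set A) = CS TYPE('a) m"
    by (rule CS_attained)
  obtain B :: "'b set" where B: "finite B" "card B \<le> k" "card (closure_set B) = CS TYPE('b) k"
    by (rule CS_attained)
  define S where "S = A \<times> {bot} \<union> {bot} \<times> B"
  have "finite S" using A B by (simp add: S_def)
  have "card S \<le> card (A \<times> {bot::'b}) + card ({bot::'a} \<times> B)"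
    unfolding S_def by (rule card_Un_le)
  also have "\<dots> \<le> m + k" using A B by (simp add: card_cartesian_product)
  finally have "card S \<le> m + k" .
  have "CS TYPE('a) m * CS TYPE('b) k = card (closure_set A \<times> closure_set B)"
    using A B by (simp add: card_cartesian_product)
  also have "\<dots> \<le> card (closure_set S)"
    unfolding S_def using A B \<open>finite S\<close>
    by (intro card_mono closure_set_axes) (auto simp: S_def closure_set_eq_image_Pow)
  also have "\<dots> \<le> CS TYPE('a \<times> 'b) (m + k)"
    using card_closure_set_le_CS \<open>finite S\<close> \<open>card S \<le> m + k\<close> by blast
  finally show ?thesis .
qed

lemma bigOmega_mono:
  assumes "bigOmega f g" "\<And>n. f n \<le> h n"
  shows "bigOmega h g"
  using assms unfolding bigOmega_def by (meson of_nat_le_iff order_trans)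

lemma bigOmega_mult:
  assumes "bigOmega f g" "bigOmega f' g'"
  shows "bigOmega (\<lambda>n. f n * f' n) (\<lambda>n. g n * g' n)"
proof -
  obtain N and C :: rat where C: "C > 0" and f: "\<forall>n\<ge>N. of_nat (f n) \<ge> C * of_nat (g n)"
    using assms(1) unfolding bigOmega_def by blast
  obtain N' and C' :: rat where C': "C' > 0" and f': "\<forall>n\<ge>N'. of_nat (f' n) \<ge> C' * of_nat (g' n)"
    using assms(2) unfolding bigOmega_def by blast
  have "of_nat (f n * f' n) \<ge> (C * C') * of_nat (g n * g' n)" if "n \<ge> max N N'" for n
  proof -
    have "(C * C') * of_nat (g n * g' n) = (C * of_nat (g n)) * (C' * of_nat (g' n))"
      by (simp add: algebra_simps)
    also have "\<dots> \<le> of_nat (f n) * of_nat (f' n)"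
      using f f' C C' that by (intro mult_mono) auto
    finally show ?thesis by simp
  qed
  moreover have "C * C' > 0" using C C' by simp
  ultimately show ?thesis unfolding bigOmega_def by blast
qed

lemma bigOmega_div2:
  assumes "bigOmega f g"
  shows "bigOmega (\<lambda>n. f (n div 2)) (\<lambda>n. g (n div 2))"
proof -
  obtain N and C :: rat where "C > 0" "\<forall>n\<ge>N. of_nat (f n) \<ge> C * of_nat (g n)"
    using assms unfolding bigOmega_def by blast
  moreover have "n div 2 \<ge> N" if "n \<ge> 2 * N" for n :: nat
    using that by linarith
  ultimately show ?thesis unfolding bigOmega_def by blast
qed

theorem mainTheorem4:
  fixes l l' :: "nat \<Rightarrow> nat"
  assumes "\<forall>n. l n > 0"
    and "\<forall>n. l' n > 0"
    and "lattice_Omega TYPE('a::{semilattice_sup,order_bot}) l"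
    and "lattice_Omega TYPE('b::{semilattice_sup,order_bot}) l'"
  shows "lattice_Omega TYPE('a \<times> 'b) (\<lambda>n. l (n div 2) * l' (n div 2))"
proof -
  have "bigOmega (\<lambda>n. CS TYPE('a) (n div 2) * CS TYPE('b) (n div 2))
                 (\<lambda>n. l (n div 2) * l' (n div 2))"
    using assms(3,4) unfolding lattice_Omega_def by (intro bigOmega_mult bigOmega_div2)
  moreover have "CS TYPE('a) (n div 2) * CS TYPE('b) (n div 2) \<le> CS TYPE('a \<times> 'b) n" for n
    using order_trans[OF CS_mult_le_CS_prod CS_mono[where 'a="'a \<times> 'b"]] by simp
  ultimately show ?thesis unfolding lattice_Omega_def by (rule bigOmega_mono)
qed

end
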